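(* Let $G=(V,E)$ be a claw-free graph and $I$ a maximum cardinality independent set of $G$. Let $\mathtt{T2}=\bigcup_{a\in I}\mathtt{T2}^a$ and let $G_{\mathtt{T2}}$ be the graph with vertex set $\mathtt{T2}$ whose edges are those edges of $G[\mathtt{T2}]$ whose endpoints lie in different $1$-packs. Let $v,w\in\mathtt{T2}$ with $v\in V_a$, $w\in V_b$, $a\ne b$. Then $vw\in E$ if and only if $v$ and $w$ lie in the same connected component of $G_{\mathtt{T2}}$.
   Context: Graphs are finite, simple, undirected; claw-free means no induced $K_{1,3}$. For $a\in I$, the $1$-pack $V_a$ is $\{v\in V\setminus I : N(v)\cap I=\{a\}\}$. For $a\in I$, $\mathtt{T2}^a$ is the set of vertices $v\in V_a$ that have neighbours in at least two distinct $1$-packs other than $V_a$. *)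

theory Defs
  imports Main
begin

definition simple_graph :: "'a set \<Rightarrow> ('a \<Rightarrow> 'a \<Rightarrow> bool) \<Rightarrow> bool" where
  "simple_graph V E \<longleftrightarrow> finite V \<and> (\<forall>x y. E x y \<longrightarrow> E y x) \<and> (\<forall>x. \<not> E x x)
     \<and> (\<forall>x y. E x y \<longrightarrow> x \<in> V \<and> y \<in> V)"

definition claw_free :: "'a set \<Rightarrow> ('a \<Rightarrow> 'a \<Rightarrow> bool) \<Rightarrow> bool" where
  "claw_free V E \<longleftrightarrow> \<not> (\<exists>c\<in>V. \<exists>x\<in>V. \<exists>y\<in>V. \<exists>z\<in>V.
      E c x \<and> E c y \<and> E c z \<and> x \<noteq> y \<and> x \<noteq> z \<and> y \<noteq> z \<and>
      \<not> E x y \<and> \<not> E x z \<and> \<not> E y z)"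

definition independent_set :: "'a set \<Rightarrow> ('a \<Rightarrow> 'a \<Rightarrow> bool) \<Rightarrow> 'a set \<Rightarrow> bool" where
  "independent_set V E I \<longleftrightarrow> I \<subseteq> V \<and> (\<forall>x\<in>I. \<forall>y\<in>I. \<not> E x y)"

definition maximum_independent_set :: "'a set \<Rightarrow> ('a \<Rightarrow> 'a \<Rightarrow> bool) \<Rightarrow> 'a set \<Rightarrow> bool" where
  "maximum_independent_set V E I \<longleftrightarrow> independent_set V E I \<and>
     (\<forall>J. independent_set V E J \<longrightarrow> card J \<le> card I)"

definition one_pack :: "'a set \<Rightarrow> ('a \<Rightarrow> 'a \<Rightarrow> bool) \<Rightarrow> 'a set \<Rightarrow> 'a \<Rightarrow> 'a set" where
  "one_pack V E I a = {v \<in> V - I. {u \<in> I. E v u} = {a}}"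

definition T2_at :: "'a set \<Rightarrow> ('a \<Rightarrow> 'a \<Rightarrow> bool) \<Rightarrow> 'a set \<Rightarrow> 'a \<Rightarrow> 'a set" where
  "T2_at V E I a = {v \<in> one_pack V E I a. \<exists>b\<in>I. \<exists>c\<in>I. b \<noteq> c \<and> b \<noteq> a \<and> c \<noteq> a \<and>
      (\<exists>x\<in>one_pack V E I b. E v x) \<and> (\<exists>y\<in>one_pack V E I c. E v y)}"

definition T2 :: "'a set \<Rightarrow> ('a \<Rightarrow> 'a \<Rightarrow> bool) \<Rightarrow> 'a set \<Rightarrow> 'a set" where
  "T2 V E I = (\<Union>a\<in>I. T2_at V E I a)"

definition G_T2_edge :: "'a set \<Rightarrow> ('a \<Rightarrow> 'a \<Rightarrow> bool) \<Rightarrow> 'a set \<Rightarrow> 'a \<Rightarrow> 'a \<Rightarrow> bool" where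
  "G_T2_edge V E I x y \<longleftrightarrow> x \<in> T2 V E I \<and> y \<in> T2 V E I \<and> E x y \<and>
     (\<forall>a\<in>I. x \<in> one_pack V E I a \<longrightarrow> y \<notin> one_pack V E I a)"

definition same_component_T2 :: "'a set \<Rightarrow> ('a \<Rightarrow> 'a \<Rightarrow> bool) \<Rightarrow> 'a set \<Rightarrow> 'a \<Rightarrow> 'a \<Rightarrow> bool" where
  "same_component_T2 V E I x y \<longleftrightarrow> (x, y) \<in> {(p, q). G_T2_edge V E I p q}\<^sup>*"

end

theory Submission
  imports Defs
begin

text \<open>Every 1-pack is a clique, since two non-adjacent vertices of \<open>V\<^sub>a\<close> could replace \<open>a\<close> in
  the maximum independent set \<open>I\<close>. Claw-freeness at a vertex \<open>t \<in> V\<^sub>p\<close>, whose neighbour \<open>p\<close> is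
  non-adjacent to all vertices of other packs, forces any two neighbours of \<open>t\<close> in packs other
  than \<open>V\<^sub>p\<close> to be adjacent. Propagating these two facts along a path of \<open>G\<^sub>T\<^sub>2\<close> starting at \<open>v\<close>
  shows that every vertex reached is adjacent to \<open>v\<close>. The only delicate case is a path that
  re-enters \<open>V\<^sub>a\<close> at \<open>t\<close> and leaves it again towards \<open>t' \<in> V\<^sub>b\<close>: then \<open>v\<close> and \<open>t\<close> have a common
  neighbour outside \<open>V\<^sub>a\<close>, and a neighbour of \<open>t'\<close> in a third pack, which exists because
  \<open>t' \<in> T2\<close>, lets claw-freeness carry the edge \<open>t t'\<close> over to \<open>v t'\<close>.\<close>

lemma simple_graph_sym: "simple_graph V E \<Longrightarrow> E x y \<Longrightarrow> E y x"
  unfolding simple_graph_def by blast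

lemma one_pack_memD:
  assumes "x \<in> one_pack V E I a"
  shows "x \<in> V" "x \<notin> I" "a \<in> I" "E x a"
  using assms unfolding one_pack_def by auto

lemma one_pack_adj_in_I:
  "x \<in> one_pack V E I a \<Longrightarrow> c \<in> I \<Longrightarrow> E x c \<Longrightarrow> c = a"
  unfolding one_pack_def by auto

lemma one_pack_disjoint:
  "x \<in> one_pack V E I a \<Longrightarrow> x \<in> one_pack V E I b \<Longrightarrow> a = b"
  unfolding one_pack_def by auto

lemma one_pack_neq:
  "x \<in> one_pack V E I a \<Longrightarrow> y \<in> one_pack V E I b \<Longrightarrow> a \<noteq> b \<Longrightarrow> x \<noteq> y"
  using one_pack_disjoint by metis

lemma T2_obtain_pack:
  assumes "t \<in> T2 V E I"
  obtains p where "t \<in> one_pack V E I p"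
  using assms unfolding T2_def T2_at_def by auto

lemma T2_neighbour_in_third_pack:
  assumes "t \<in> T2 V E I" and "t \<in> one_pack V E I b"
  obtains e q where "e \<noteq> a" "e \<noteq> b" "q \<in> one_pack V E I e" "E t q"
proof -
  obtain d where "t \<in> T2_at V E I d"
    using assms(1) unfolding T2_def by auto
  moreover from this have "d = b"
    using assms(2) one_pack_disjoint unfolding T2_at_def by fastforce
  ultimately obtain e1 e2 x y where "e1 \<noteq> e2" "e1 \<noteq> b" "e2 \<noteq> b"
      "x \<in> one_pack V E I e1" "E t x" "y \<in> one_pack V E I e2" "E t y"
    unfolding T2_at_def by blast
  then show ?thesis
    using that[of e1 x] that[of e2 y] by (cases "e1 = a") simp_all
qed

lemma one_pack_clique:
  assumes g: "simple_graph V E" and m: "maximum_independent_set V E I"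
    and p: "p \<in> one_pack V E I a" and q: "q \<in> one_pack V E I a" and "p \<noteq> q"
  shows "E p q"
proof (rule ccontr)
  assume "\<not> E p q"
  let ?J = "insert p (insert q (I - {a}))"
  have ind: "independent_set V E I"
    using m unfolding maximum_independent_set_def by blast
  then have "I \<subseteq> V" "finite I"
    using g finite_subset unfolding independent_set_def simple_graph_def by auto
  have no_edge_to_I: "\<not> E z c" "\<not> E c z" if "z \<in> one_pack V E I a" "c \<in> I - {a}" for z c
    using one_pack_adj_in_I[OF that(1)] that(2) simple_graph_sym[OF g] by blast+
  have "\<not> E q p" "\<not> E p p" "\<not> E q q"
    using \<open>\<not> E p q\<close> g simple_graph_sym[OF g] unfolding simple_graph_def by blast+
  then have "independent_set V E ?J"
    using \<open>I \<subseteq> V\<close> ind \<open>\<not> E p q\<close> one_pack_memD(1)[OF p] one_pack_memD(1)[OF q]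
      no_edge_to_I[OF p] no_edge_to_I[OF q]
    unfolding independent_set_def by auto
  then have "card ?J \<le> card I"
    using m unfolding maximum_independent_set_def by blast
  moreover have "card ?J = Suc (Suc (card (I - {a})))"
    using \<open>finite I\<close> \<open>p \<noteq> q\<close> one_pack_memD(2)[OF p] one_pack_memD(2)[OF q] by simp
  moreover have "card (I - {a}) = card I - 1" "card I > 0"
    using \<open>finite I\<close> one_pack_memD(3)[OF p] card_gt_0_iff by (simp, blast)
  ultimately show False
    by linarith
qed

lemma claw_free_neighbours_in_other_packs:
  assumes g: "simple_graph V E" and cf: "claw_free V E"
    and t: "t \<in> one_pack V E I p" and x: "x \<in> one_pack V E I c1" and y: "y \<in> one_pack V E I c2"
    and "c1 \<noteq> p" "c2 \<noteq> p" "E t x" "E t y" "x \<noteq> y"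
  shows "E x y"
proof (rule ccontr)
  assume "\<not> E x y"
  have "p \<in> I" "E t p"
    using one_pack_memD(3,4)[OF t] by blast+
  have "\<not> E x p" "\<not> E y p"
    using one_pack_adj_in_I[OF x \<open>p \<in> I\<close>] one_pack_adj_in_I[OF y \<open>p \<in> I\<close>] assms(6,7)
    by blast+
  then have "\<not> E p x" "\<not> E p y"
    using simple_graph_sym[OF g] by blast+
  moreover have "p \<noteq> x" "p \<noteq> y"
    using one_pack_memD(2)[OF x] one_pack_memD(2)[OF y] \<open>p \<in> I\<close> by blast+
  moreover have "t \<in> V" "p \<in> V" "x \<in> V" "y \<in> V"
    using one_pack_memD(1)[OF t] one_pack_memD(1)[OF x] one_pack_memD(1)[OF y]
      g \<open>E t p\<close> unfolding simple_graph_def by blast+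
  ultimately have "\<exists>c\<in>V. \<exists>x\<in>V. \<exists>y\<in>V. \<exists>z\<in>V.
      E c x \<and> E c y \<and> E c z \<and> x \<noteq> y \<and> x \<noteq> z \<and> y \<noteq> z \<and>
      \<not> E x y \<and> \<not> E x z \<and> \<not> E y z"
    using \<open>\<not> E x y\<close> \<open>E t p\<close> assms(8-10)
    by (intro bexI[of _ t] bexI[of _ p] bexI[of _ x] bexI[of _ y]) simp_all
  then show False
    using cf unfolding claw_free_def by (elim notE)
qed

locale claw_free_graph_with_mis =
  fixes V :: "'a set" and E :: "'a \<Rightarrow> 'a \<Rightarrow> bool" and I :: "'a set"
  assumes graph: "simple_graph V E"
    and claw_free: "claw_free V E"
    and maximum: "maximum_independent_set V E I"
begin

lemmas sym = simple_graph_sym[OF graph]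
lemmas claw = claw_free_neighbours_in_other_packs[OF graph claw_free]

lemma common_outer_neighbour_shares_T2_neighbours:
  assumes s: "s \<in> one_pack V E I a" and t: "t \<in> one_pack V E I a"
    and r: "r \<in> one_pack V E I c" and "c \<noteq> a" and "E s r" and "E t r"
    and t': "t' \<in> one_pack V E I b" and "b \<noteq> a" and "E t t'" and "t' \<in> T2 V E I"
  shows "E s t'"
proof (cases "c = b")
  case False
  have "E r t'"
    using claw[OF t r t'] assms one_pack_neq[OF r t' False] by blast
  then show ?thesis
    using claw[OF r s t'] assms False one_pack_neq[OF s t'] sym by metis
next
  case True
  show ?thesis
  proof (cases "r = t'")
    case False
    obtain e q where e: "e \<noteq> a" "e \<noteq> b" and q: "q \<in> one_pack V E I e" and "E t' q"
      using T2_neighbour_in_third_pack[OF \<open>t' \<in> T2 V E I\<close> t'] by metis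
    have "E t q"
      using claw[OF t' t q] assms e \<open>E t' q\<close> one_pack_neq[OF t q] sym by metis
    then have "E r q"
      using claw[OF t r q] assms e True one_pack_neq[OF r q] by metis
    then have "E s q"
      using claw[OF r s q] assms e True one_pack_neq[OF s q] sym by metis
    then show ?thesis
      using claw[OF q s t'] assms e \<open>E t' q\<close> one_pack_neq[OF s t'] sym by metis
  qed (use \<open>E s r\<close> in simp)
qed

text \<open>The invariant satisfied by every vertex \<open>t \<noteq> v\<close> reachable from \<open>v \<in> V\<^sub>a\<close> in \<open>G\<^sub>T\<^sub>2\<close>; the
  common neighbour is what allows a later edge leaving \<open>V\<^sub>a\<close> to be transferred to \<open>v\<close>.\<close>
definition linked :: "'a \<Rightarrow> 'a \<Rightarrow> 'a \<Rightarrow> bool" where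
  "linked a v t \<longleftrightarrow> E v t \<and> (t \<in> one_pack V E I a \<longrightarrow>
     (\<exists>c r. c \<noteq> a \<and> r \<in> one_pack V E I c \<and> E v r \<and> E t r))"

lemma linked_G_T2_step:
  assumes v: "v \<in> one_pack V E I a" and t: "t = v \<or> linked a v t"
    and edge: "G_T2_edge V E I t t'" and "t' \<noteq> v"
  shows "linked a v t'"
proof -
  have "t' \<in> T2 V E I" "E t t'" and tT: "t \<in> T2 V E I"
    using edge unfolding G_T2_edge_def by auto
  obtain p where p: "t \<in> one_pack V E I p"
    using T2_obtain_pack[OF tT] by metis
  obtain p' where p': "t' \<in> one_pack V E I p'"
    using T2_obtain_pack[OF \<open>t' \<in> T2 V E I\<close>] by metis
  have "p \<noteq> p'"
    using edge p p' one_pack_memD(3)[OF p] unfolding G_T2_edge_def by blast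
  have "E v t'"
  proof (cases "t = v")
    case False
    with t have "E v t" and common: "t \<in> one_pack V E I a \<Longrightarrow>
        \<exists>c r. c \<noteq> a \<and> r \<in> one_pack V E I c \<and> E v r \<and> E t r"
      unfolding linked_def by auto
    consider "p \<noteq> a" "p' \<noteq> a" | "p' = a" | "p = a"
      by blast
    then show ?thesis
    proof cases
      case 1
      then show ?thesis
        using claw[OF p v p'] \<open>E v t\<close> \<open>E t t'\<close> \<open>t' \<noteq> v\<close> \<open>p \<noteq> p'\<close> sym by metis
    next
      case 2
      then show ?thesis
        using one_pack_clique[OF graph maximum v] p' \<open>t' \<noteq> v\<close> by blast
    next
      case 3
      with p obtain c r where "c \<noteq> a" "r \<in> one_pack V E I c" "E v r" "E t r"
        using common by blast
      with 3 show ?thesis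
        using common_outer_neighbour_shares_T2_neighbours[OF v _ _ _ _ _ p'] p
          \<open>p \<noteq> p'\<close> \<open>E t t'\<close> \<open>t' \<in> T2 V E I\<close> by blast
    qed
  qed (use \<open>E t t'\<close> in simp)
  moreover have "\<exists>c r. c \<noteq> a \<and> r \<in> one_pack V E I c \<and> E v r \<and> E t' r"
    if "t' \<in> one_pack V E I a"
  proof -
    have "p \<noteq> a"
      using one_pack_disjoint[OF that p'] \<open>p \<noteq> p'\<close> by simp
    then have "t \<noteq> v"
      using one_pack_disjoint[OF v] p by blast
    then have "E v t"
      using t unfolding linked_def by blast
    then show ?thesis
      using \<open>p \<noteq> a\<close> p \<open>E t t'\<close> sym by blast
  qed
  ultimately show ?thesis
    unfolding linked_def by blast
qed

lemma G_T2_reachable_linked: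
  assumes "v \<in> one_pack V E I a"
    and "(v, t) \<in> {(p, q). G_T2_edge V E I p q}\<^sup>*"
  shows "t = v \<or> linked a v t"
  using assms(2)
proof (induction rule: rtrancl_induct)
  case (step t t')
  then show ?case
    using linked_G_T2_step[OF assms(1)] by blast
qed simp

end

theorem lemma11:
  fixes V :: "'a set" and E :: "'a \<Rightarrow> 'a \<Rightarrow> bool" and I :: "'a set"
  assumes "simple_graph V E"
    and "claw_free V E"
    and "maximum_independent_set V E I"
    and "a \<in> I" and "b \<in> I" and "a \<noteq> b"
    and "v \<in> T2 V E I" and "w \<in> T2 V E I"
    and "v \<in> one_pack V E I a" and "w \<in> one_pack V E I b"
  shows "E v w \<longleftrightarrow> same_component_T2 V E I v w"
proof
  assume "E v w"
  then have "G_T2_edge V E I v w"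
    using assms(6-10) one_pack_disjoint unfolding G_T2_edge_def by metis
  then show "same_component_T2 V E I v w"
    unfolding same_component_T2_def by auto
next
  interpret claw_free_graph_with_mis V E I
    using assms(1-3) by unfold_locales
  assume "same_component_T2 V E I v w"
  then have "w = v \<or> linked a v w"
    using G_T2_reachable_linked[OF assms(9)] unfolding same_component_T2_def by blast
  moreover have "w \<noteq> v"
    using one_pack_neq assms(6,9,10) by metis
  ultimately show "E v w"
    unfolding linked_def by blast
qed

end
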